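(* Let $d\ge1$, $K\ge2$, $n\ge1$ be integers. (i) If $(\mathbf W^\star,\mathbf H^\star)$ is an optimal solution of $\min_{\mathbf W\in\mathrm{OB}(d,K),\mathbf H\in\mathrm{OB}(d,nK)}\mathcal L_{\mathrm{HardMax}}(\mathbf W,\mathbf H)$, then $\mathbf W^\star\in\operatorname{argmax}_{\mathbf W\in\mathrm{OB}(d,K)}\rho_{\text{one-vs-rest}}(\mathbf W)$. (ii) Conversely, for every $\mathbf W^{\mathrm{SC}}\in\operatorname{argmax}_{\mathbf W\in\mathrm{OB}(d,K)}\rho_{\text{one-vs-rest}}(\mathbf W)$ there exists $\mathbf H^{\mathrm{SC}}\in\mathrm{OB}(d,nK)$ such that $(\mathbf W^{\mathrm{SC}},\mathbf H^{\mathrm{SC}})$ is an optimal solution of that minimization problem.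
   Context: $\mathrm{OB}(d,m)$ is the set of real $d\times m$ matrices with unit-norm columns. $\mathbf W\in\mathrm{OB}(d,K)$ has columns $\mathbf w_1,\dots,\mathbf w_K$; $\mathbf H\in\mathrm{OB}(d,nK)$ has columns $\mathbf h_{k,i}$, $k\in[K],i\in[n]$. $\mathcal L_{\mathrm{HardMax}}(\mathbf W,\mathbf H)=\max_{k\in[K]}\max_{i\in[n]}\max_{k'\ne k}\langle \mathbf w_{k'}-\mathbf w_k,\mathbf h_{k,i}\rangle$. For a point $\mathbf v$ and finite set $\mathcal W$, $\operatorname{dist}(\mathbf v,\mathcal W)=\inf\{\|\mathbf v-\mathbf w\|_2:\mathbf w\in\operatorname{conv}(\mathcal W)\}$, and $\rho_{\text{one-vs-rest}}(\mathbf W)=\min_{k}\operatorname{dist}(\mathbf w_k,\{\mathbf w_j\}_{j\ne k})$. *)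

theory Defs
  imports "HOL-Analysis.Analysis"
begin

text \<open>Vectors in R^d are elements of real^'d (d = CARD('d) \<ge> 1).
  A d x m matrix is represented by its columns, a function nat \<Rightarrow> real^'d,
  where only the columns with index < m matter.  The columns h_{k,i} of
  H \<in> OB(d,nK) are indexed as H k i with k < K, i < n.\<close>

definition OB :: "nat \<Rightarrow> (nat \<Rightarrow> real^'d) set" where
  "OB m = {W. \<forall>j<m. norm (W j) = 1}"

definition OB2 :: "nat \<Rightarrow> nat \<Rightarrow> (nat \<Rightarrow> nat \<Rightarrow> real^'d) set" where
  "OB2 K n = {H. \<forall>k<K. \<forall>i<n. norm (H k i) = 1}"

definition L_HardMax :: "nat \<Rightarrow> nat \<Rightarrow> (nat \<Rightarrow> real^'d) \<Rightarrow> (nat \<Rightarrow> nat \<Rightarrow> real^'d) \<Rightarrow> real" where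
  "L_HardMax K n W H =
     Max {inner (W k' - W k) (H k i) | k i k'. k < K \<and> i < n \<and> k' < K \<and> k' \<noteq> k}"

definition dist_hull :: "real^'d \<Rightarrow> (real^'d) set \<Rightarrow> real" where
  "dist_hull v S = (INF w\<in>convex hull S. norm (v - w))"

definition rho_ovr :: "nat \<Rightarrow> (nat \<Rightarrow> real^'d) \<Rightarrow> real" where
  "rho_ovr K W = Min ((\<lambda>k. dist_hull (W k) {W j | j. j < K \<and> j \<noteq> k}) ` {..<K})"

definition is_opt_HardMax :: "nat \<Rightarrow> nat \<Rightarrow> (nat \<Rightarrow> real^'d) \<Rightarrow> (nat \<Rightarrow> nat \<Rightarrow> real^'d) \<Rightarrow> bool" where
  "is_opt_HardMax K n W H \<longleftrightarrow> W \<in> OB K \<and> H \<in> OB2 K n \<and>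
     (\<forall>W'\<in>(OB K :: (nat \<Rightarrow> real^'d) set). \<forall>H'\<in>(OB2 K n :: (nat \<Rightarrow> nat \<Rightarrow> real^'d) set). L_HardMax K n W H \<le> L_HardMax K n W' H')"

definition is_argmax_rho :: "nat \<Rightarrow> (nat \<Rightarrow> real^'d) \<Rightarrow> bool" where
  "is_argmax_rho K W \<longleftrightarrow> W \<in> OB K \<and> (\<forall>W'\<in>(OB K :: (nat \<Rightarrow> real^'d) set). rho_ovr K W' \<le> rho_ovr K W)"

end

theory Submission
  imports Defs
begin

text \<open>For a fixed W the best features give L_HardMax = -rho_ovr(W), so minimising the loss
  jointly is the same as maximising rho_ovr.  Fix a class k, let S be the set of the other
  columns of W and c the point of conv S closest to w_k.  For any unit feature h,
  Cauchy-Schwarz gives \<open>\<langle>c - w_k, h\<rangle> \<ge> -|w_k - c|\<close>, and the linear functional \<open>\<langle>-, h\<rangle>\<close>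
  is at least as large at some vertex of conv S; hence some competitor j has
  \<open>\<langle>w_j - w_k, h\<rangle> \<ge> -dist(w_k, S)\<close>.  Conversely, the unit vector h pointing from c to w_k
  makes an obtuse angle with every \<open>s - c\<close>, s in conv S, so it achieves
  \<open>\<langle>w_j - w_k, h\<rangle> \<le> -dist(w_k, S)\<close> for all j at once; if w_k lies in conv S, h = w_k works
  because all columns have unit norm.\<close>

lemma ex_inner_ge_on_convex_hull:
  fixes h :: "'a::real_inner"
  assumes "finite S" and "c \<in> convex hull S"
  obtains s where "s \<in> S" and "inner h c \<le> inner h s"
proof -
  have "S \<noteq> {}" using assms(2) by auto
  then have "Max (inner h ` S) \<in> inner h ` S" using assms(1) by simp
  then obtain s where s: "s \<in> S" "inner h s = Max (inner h ` S)" by auto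
  have "convex hull S \<subseteq> {x. inner h x \<le> inner h s}"
    using s assms(1) by (intro hull_minimal) (auto simp: convex_halfspace_le)
  with assms(2) s(1) that show ?thesis by blast
qed

lemma closed_convex_hull_finite: "finite S \<Longrightarrow> closed (convex hull S)"
  for S :: "'a::euclidean_space set"
  by (simp add: compact_imp_closed finite_imp_compact_convex_hull)

lemma dist_hull_eq_closest_point:
  fixes v :: "real^'d"
  assumes "finite S" and "S \<noteq> {}"
  shows "dist_hull v S = dist v (closest_point (convex hull S) v)"
proof -
  have closed: "closed (convex hull S)" using closed_convex_hull_finite[OF assms(1)] .
  have ne: "convex hull S \<noteq> {}" using assms(2) by simp
  show ?thesis
    unfolding dist_hull_def dist_norm[symmetric]
  proof (rule antisym)
    show "(INF w\<in>convex hull S. dist v w) \<le> dist v (closest_point (convex hull S) v)"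
      using closest_point_in_set[OF closed ne] by (intro cINF_lower) auto
    show "dist v (closest_point (convex hull S) v) \<le> (INF w\<in>convex hull S. dist v w)"
      using closest_point_le[OF closed] ne by (intro cINF_greatest) auto
  qed
qed

lemma ex_inner_diff_ge_neg_dist_hull:
  fixes v h :: "real^'d"
  assumes "finite S" and "S \<noteq> {}" and "norm h \<le> 1"
  obtains s where "s \<in> S" and "- dist_hull v S \<le> inner (s - v) h"
proof -
  define c where "c = closest_point (convex hull S) v"
  have "c \<in> convex hull S"
    unfolding c_def using closed_convex_hull_finite[OF assms(1)] assms(2)
    by (intro closest_point_in_set) simp_all
  then obtain s where s: "s \<in> S" "inner h c \<le> inner h s"
    using ex_inner_ge_on_convex_hull[OF assms(1)] by blast
  have "- dist_hull v S \<le> - (norm (c - v) * norm h)"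
    using assms mult_left_le[OF assms(3) norm_ge_zero, of "c - v"]
    by (simp add: dist_hull_eq_closest_point c_def dist_norm norm_minus_commute)
  also have "\<dots> \<le> inner (c - v) h"
    using Cauchy_Schwarz_ineq2[of "c - v" h] by linarith
  also have "\<dots> \<le> inner (s - v) h"
    using s(2) by (simp add: inner_diff_left inner_commute[of c h] inner_commute[of s h])
  finally show ?thesis using s(1) that by blast
qed

lemma ex_unit_inner_diff_le_neg_dist_hull:
  fixes v :: "real^'d"
  assumes "finite S" and "S \<noteq> {}" and "norm v = 1" and "\<And>s. s \<in> S \<Longrightarrow> norm s \<le> 1"
  obtains h where "norm h = 1" and "\<And>s. s \<in> S \<Longrightarrow> inner (s - v) h \<le> - dist_hull v S"
proof (cases "v \<in> convex hull S")
  case True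
  then have "dist_hull v S = 0"
    using assms(1,2) by (simp add: dist_hull_eq_closest_point closest_point_self)
  moreover have "inner (s - v) v \<le> 0" if "s \<in> S" for s
    using norm_cauchy_schwarz[of s v] assms(3) assms(4)[OF that]
    by (simp add: inner_diff_left flip: power2_norm_eq_inner)
  ultimately show ?thesis using assms(3) that by auto
next
  case False
  have closed: "closed (convex hull S)" using closed_convex_hull_finite[OF assms(1)] .
  define c where "c = closest_point (convex hull S) v"
  have "c \<in> convex hull S"
    unfolding c_def using closed assms(2) by (intro closest_point_in_set) simp_all
  with False have "v \<noteq> c" by auto
  define u where "u = norm (v - c)"
  have u: "u > 0" using \<open>v \<noteq> c\<close> by (simp add: u_def)
  have dist: "dist_hull v S = u"
    using assms(1,2) by (simp add: dist_hull_eq_closest_point u_def c_def dist_norm)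
  show ?thesis
  proof (rule that)
    show "norm (sgn (v - c)) = 1" using \<open>v \<noteq> c\<close> by (simp add: norm_sgn)
    fix s assume "s \<in> S"
    then have "inner (v - c) (s - c) \<le> 0"
      unfolding c_def using closest_point_dot[OF convex_convex_hull closed] by (simp add: hull_inc)
    moreover have "inner (s - v) (v - c) = inner (v - c) (s - c) - inner (v - c) (v - c)"
      using inner_diff_left[of "s - c" "v - c" "v - c"] by (simp add: inner_commute)
    moreover have "inner (v - c) (v - c) = u * u"
      by (simp add: u_def dot_square_norm power2_eq_square)
    ultimately have "inner (s - v) (v - c) / u \<le> - u"
      using u by (simp add: divide_le_eq)
    then show "inner (s - v) (sgn (v - c)) \<le> - dist_hull v S"
      by (simp add: dist sgn_div_norm u_def[symmetric] divide_inverse mult.commute)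
  qed
qed

definition other_columns :: "nat \<Rightarrow> (nat \<Rightarrow> real^'d) \<Rightarrow> nat \<Rightarrow> (real^'d) set" where
  "other_columns K W k = {W j | j. j < K \<and> j \<noteq> k}"

lemma finite_other_columns: "finite (other_columns K W k)"
  by (simp add: other_columns_def)

lemma other_columns_nonempty:
  assumes "K \<ge> 2"
  shows "other_columns K W k \<noteq> {}"
proof -
  have "W (if k = 0 then 1 else 0) \<in> other_columns K W k"
    using assms by (auto simp: other_columns_def)
  then show ?thesis by blast
qed

lemma rho_ovr_le: "k < K \<Longrightarrow> rho_ovr K W \<le> dist_hull (W k) (other_columns K W k)"
  unfolding rho_ovr_def other_columns_def by (rule Min_le) auto

lemma rho_ovr_attained:
  assumes "K \<ge> 2"
  obtains k where "k < K" and "rho_ovr K W = dist_hull (W k) (other_columns K W k)"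
proof -
  have "rho_ovr K W \<in> (\<lambda>k. dist_hull (W k) (other_columns K W k)) ` {..<K}"
    unfolding rho_ovr_def other_columns_def using assms
    by (intro Min_in) (auto simp: lessThan_empty_iff)
  with that show ?thesis by auto
qed

lemma finite_L_HardMax_values:
  fixes K n :: nat
  shows "finite {inner (W k' - W k) (H k i) | k i k'. k < K \<and> i < n \<and> k' < K \<and> k' \<noteq> k}"
proof (rule finite_subset)
  show "finite ((\<lambda>(k, i, k'). inner (W k' - W k) (H k i)) ` ({..<K} \<times> {..<n} \<times> {..<K}))"
    by (intro finite_imageI finite_cartesian_product) simp_all
qed force

lemma inner_le_L_HardMax:
  assumes "k < K" and "i < n" and "k' < K" and "k' \<noteq> k"
  shows "inner (W k' - W k) (H k i) \<le> L_HardMax K n W H"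
  unfolding L_HardMax_def using assms by (intro Max_ge[OF finite_L_HardMax_values]) blast

lemma L_HardMax_le:
  assumes "K \<ge> 2" and "n \<ge> 1"
    and "\<And>k i k'. k < K \<Longrightarrow> i < n \<Longrightarrow> k' < K \<Longrightarrow> k' \<noteq> k \<Longrightarrow> inner (W k' - W k) (H k i) \<le> b"
  shows "L_HardMax K n W H \<le> b"
  unfolding L_HardMax_def
proof (rule Max.boundedI[OF finite_L_HardMax_values])
  have "inner (W 1 - W 0) (H 0 0)
      \<in> {inner (W k' - W k) (H k i) | k i k'. k < K \<and> i < n \<and> k' < K \<and> k' \<noteq> k}"
    using assms(1,2) by force
  then show "{inner (W k' - W k) (H k i) | k i k'. k < K \<and> i < n \<and> k' < K \<and> k' \<noteq> k} \<noteq> {}"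
    by blast
qed (use assms(3) in blast)

lemma neg_rho_ovr_le_L_HardMax:
  assumes "K \<ge> 2" and "n \<ge> 1" and "H \<in> OB2 K n"
  shows "- rho_ovr K W \<le> L_HardMax K n W H"
proof -
  obtain k where k: "k < K" "rho_ovr K W = dist_hull (W k) (other_columns K W k)"
    using rho_ovr_attained[OF assms(1)] .
  have "norm (H k 0) \<le> 1" using assms(2,3) k(1) by (simp add: OB2_def)
  then obtain s where s: "s \<in> other_columns K W k" "- rho_ovr K W \<le> inner (s - W k) (H k 0)"
    using ex_inner_diff_ge_neg_dist_hull[OF finite_other_columns
        other_columns_nonempty[OF assms(1)]] k(2)
    by metis
  then obtain j where "j < K" "j \<noteq> k" "s = W j" by (auto simp: other_columns_def)
  with s(2) k(1) assms(2) inner_le_L_HardMax[of k K 0 n j W H] show ?thesis by simp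
qed

lemma ex_L_HardMax_le_neg_rho_ovr:
  assumes "K \<ge> 2" and "n \<ge> 1" and "W \<in> OB K"
  obtains H where "H \<in> OB2 K n" and "L_HardMax K n W H \<le> - rho_ovr K W"
proof -
  have "\<exists>h. norm h = 1 \<and>
      (\<forall>s\<in>other_columns K W k. inner (s - W k) h \<le> - dist_hull (W k) (other_columns K W k))"
    if "k < K" for k
  proof -
    have "norm (W k) = 1" using assms(3) that by (simp add: OB_def)
    moreover have "norm s \<le> 1" if "s \<in> other_columns K W k" for s
      using assms(3) that by (auto simp: OB_def other_columns_def)
    ultimately show ?thesis
      using ex_unit_inner_diff_le_neg_dist_hull[OF finite_other_columns
          other_columns_nonempty[OF assms(1)]]
      by metis
  qed
  then obtain g where g: "\<And>k. k < K \<Longrightarrow> norm (g k) = 1"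
    "\<And>k s. k < K \<Longrightarrow> s \<in> other_columns K W k \<Longrightarrow>
      inner (s - W k) (g k) \<le> - dist_hull (W k) (other_columns K W k)"
    by metis
  show ?thesis
  proof (rule that)
    show "(\<lambda>k i. g k) \<in> OB2 K n" using g(1) by (simp add: OB2_def)
    show "L_HardMax K n W (\<lambda>k i. g k) \<le> - rho_ovr K W"
    proof (rule L_HardMax_le[OF assms(1,2)])
      fix k i k' assume "k < K" "i < n" "k' < K" "k' \<noteq> k"
      then have "inner (W k' - W k) (g k) \<le> - dist_hull (W k) (other_columns K W k)"
        by (intro g(2)) (auto simp: other_columns_def)
      with rho_ovr_le[OF \<open>k < K\<close>, of W] show "inner (W k' - W k) (g k) \<le> - rho_ovr K W"
        by linarith
    qed
  qed
qed

lemma is_opt_HardMax_iff: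
  fixes W :: "nat \<Rightarrow> real^'d"
  assumes "K \<ge> 2" and "n \<ge> 1"
  shows "is_opt_HardMax K n W H \<longleftrightarrow>
    is_argmax_rho K W \<and> H \<in> OB2 K n \<and> L_HardMax K n W H = - rho_ovr K W"
proof
  assume opt: "is_opt_HardMax K n W H"
  then have W: "W \<in> OB K" and H: "H \<in> OB2 K n" by (auto simp: is_opt_HardMax_def)
  have le: "L_HardMax K n W H \<le> - rho_ovr K W'" if "W' \<in> OB K" for W' :: "nat \<Rightarrow> real^'d"
    using ex_L_HardMax_le_neg_rho_ovr[OF assms that] opt that
    by (metis is_opt_HardMax_def order_trans)
  show "is_argmax_rho K W \<and> H \<in> OB2 K n \<and> L_HardMax K n W H = - rho_ovr K W"
    using le W H neg_rho_ovr_le_L_HardMax[OF assms H, of W]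
    by (force simp: is_argmax_rho_def)
next
  assume "is_argmax_rho K W \<and> H \<in> OB2 K n \<and> L_HardMax K n W H = - rho_ovr K W"
  then have W: "W \<in> OB K" and H: "H \<in> OB2 K n"
    and max: "\<And>W' :: nat \<Rightarrow> real^'d. W' \<in> OB K \<Longrightarrow> rho_ovr K W' \<le> rho_ovr K W"
    and L: "L_HardMax K n W H = - rho_ovr K W"
    by (auto simp: is_argmax_rho_def)
  have "L_HardMax K n W H \<le> L_HardMax K n W' H'"
    if "W' \<in> OB K" "H' \<in> OB2 K n" for W' :: "nat \<Rightarrow> real^'d" and H'
    using L max[OF that(1)] neg_rho_ovr_le_L_HardMax[OF assms that(2), of W'] by linarith
  with W H show "is_opt_HardMax K n W H" by (simp add: is_opt_HardMax_def)
qed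

theorem mainTheorem3:
  fixes K n :: nat
  assumes "K \<ge> 2" and "n \<ge> 1"
  shows "(\<forall>(W::nat \<Rightarrow> real^'d) H. is_opt_HardMax K n W H \<longrightarrow> is_argmax_rho K W)
       \<and> (\<forall>(W::nat \<Rightarrow> real^'d). is_argmax_rho K W \<longrightarrow> (\<exists>H\<in>OB2 K n. is_opt_HardMax K n W H))"
proof (intro conjI allI impI)
  fix W :: "nat \<Rightarrow> real^'d" and H
  assume "is_opt_HardMax K n W H"
  then show "is_argmax_rho K W" using is_opt_HardMax_iff[OF assms] by blast
next
  fix W :: "nat \<Rightarrow> real^'d"
  assume argmax: "is_argmax_rho K W"
  then have "W \<in> OB K" by (simp add: is_argmax_rho_def)
  then obtain H where H: "H \<in> OB2 K n" "L_HardMax K n W H \<le> - rho_ovr K W"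
    using ex_L_HardMax_le_neg_rho_ovr[OF assms] by blast
  then have "L_HardMax K n W H = - rho_ovr K W"
    using neg_rho_ovr_le_L_HardMax[OF assms H(1), of W] by linarith
  with argmax H(1) show "\<exists>H\<in>OB2 K n. is_opt_HardMax K n W H"
    using is_opt_HardMax_iff[OF assms] by blast
qed

end
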